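(* For $i=1,2,3$ let $M_i\in2^{\mathbb{Z}}$, $K_i\in2^{\mathbb{N}}$, $I_i\subset\lambda^{-1}\mathbb{Z}$, and let $f_i\in L^2(\mathbb{R}^2\times\lambda^{-1}\mathbb{Z})$ be supported in $D_{\lambda,M_i,\le K_i}\cap\{(\tau,\xi,q):q\in I_i\}$. Then \[\int_{\mathbb{R}^2\times\lambda^{-1}\mathbb{Z}}|f_1|\star|f_2|\cdot|f_3|\,d\tau\,d\xi\,dq\lesssim M_{\min}^{1/2}K_{\min}^{1/2}|I|_{\min}^{1/2}\prod_{i=1}^3\|f_i\|_{L^2},\] where $M_{\min}=\min_iM_i$, $K_{\min}=\min_iK_i$, $|I|_{\min}=\min_i|I_i|$, and the implicit constant is independent of $\lambda$ and of the parameters.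
   Context: Fix $\lambda\ge1$; on $\lambda^{-1}\mathbb{Z}$ use $dq=\lambda^{-1}\times$(counting measure), and $|I|$ for $I\subset\lambda^{-1}\mathbb{Z}$ denotes its $dq$-measure. $\star$ is the convolution on $\mathbb{R}^2\times\lambda^{-1}\mathbb{Z}$: $(f\star g)(\tau,\xi,q)=\int f(\tau-\tau',\xi-\xi',q-q')g(\tau',\xi',q')\,d\tau'd\xi'dq'$. $\omega(\xi,q)=\xi^3+q^2/\xi$, $\sigma(\tau,\xi,q)=\tau-\omega(\xi,q)$, $\langle x\rangle=(1+x^2)^{1/2}$. For $M\in2^{\mathbb{Z}}$, $K\in2^{\mathbb{N}}$: $D_{\lambda,M,\le K}=\{(\tau,\xi,q)\in\mathbb{R}^2\times\lambda^{-1}\mathbb{Z}: M/2\le|\xi|\le3M/2,\ \langle\sigma(\tau,\xi,q)\rangle\le K\}$. *)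

theory Defs
  imports "HOL-Analysis.Analysis"
begin

text \<open>Integration uses Lebesgue measure in (tau, xi) and
  lambda^{-1} times counting measure in q (q = k / lambda, k integer).\<close>

definition omega :: "real \<Rightarrow> real \<Rightarrow> real" where
  "omega \<xi> q = \<xi> ^ 3 + q ^ 2 / \<xi>"

definition sigma :: "real \<times> real \<times> real \<Rightarrow> real" where
  "sigma p = (case p of (\<tau>, \<xi>, q) \<Rightarrow> \<tau> - omega \<xi> q)"

definition japan :: "real \<Rightarrow> real" where
  "japan x = sqrt (1 + x ^ 2)"

definition lattice :: "real \<Rightarrow> real set" where
  "lattice lam = {q. \<exists>k::int. q = of_int k / lam}"

definition Dset :: "real \<Rightarrow> real \<Rightarrow> real \<Rightarrow> (real \<times> real \<times> real) set" where
  "Dset lam M K = {(\<tau>, \<xi>, q). q \<in> lattice lam \<and> M / 2 \<le> \<bar>\<xi>\<bar> \<and> \<bar>\<xi>\<bar> \<le> 3 * M / 2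
                     \<and> japan (sigma (\<tau>, \<xi>, q)) \<le> K}"

definition lint :: "real \<Rightarrow> (real \<times> real \<times> real \<Rightarrow> ennreal) \<Rightarrow> ennreal" where
  "lint lam F = (\<integral>\<^sup>+ p. (\<integral>\<^sup>+ k. ennreal (1 / lam) * F (fst p, snd p, of_int k / lam)
                      \<partial>count_space (UNIV :: int set)) \<partial>lborel)"

definition conv :: "real \<Rightarrow> (real \<times> real \<times> real \<Rightarrow> ennreal) \<Rightarrow> (real \<times> real \<times> real \<Rightarrow> ennreal)
                    \<Rightarrow> real \<times> real \<times> real \<Rightarrow> ennreal" where
  "conv lam F G x = (case x of (\<tau>, \<xi>, q) \<Rightarrow>
      lint lam (\<lambda>(\<tau>', \<xi>', q'). F (\<tau> - \<tau>', \<xi> - \<xi>', q - q') * G (\<tau>', \<xi>', q')))"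

definition L2sq :: "real \<Rightarrow> (real \<times> real \<times> real \<Rightarrow> complex) \<Rightarrow> ennreal" where
  "L2sq lam f = lint lam (\<lambda>x. ennreal (norm (f x) ^ 2))"

text \<open>L^2 norm, for functions with finite L2sq.\<close>
definition L2norm :: "real \<Rightarrow> (real \<times> real \<times> real \<Rightarrow> complex) \<Rightarrow> real" where
  "L2norm lam f = sqrt (enn2real (L2sq lam f))"

definition qmeas :: "real \<Rightarrow> real set \<Rightarrow> ennreal" where
  "qmeas lam I = ennreal (1 / lam) * emeasure (count_space (UNIV :: int set)) {k. of_int k / lam \<in> I}"

definition esqrt :: "ennreal \<Rightarrow> ennreal" where
  "esqrt x = (if x = \<infinity> then \<infinity> else ennreal (sqrt (enn2real x)))"

end

theory Submission
  imports Defs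
begin

(* In lattice coordinates q = k / lambda the left-hand side is lambda^-2 times the trilinear form T(u, v, w) = int int u(y - x) v(x) w(y) dx dy on R^2 x Z, with
  u, v, w the moduli of f1, f2, f3. Cauchy-Schwarz in x and then in y bounds T^2 by the largest
  measure of a fibre {x. u(y - x) \<noteq> 0, v(x) \<noteq> 0} times the three squared L^2 norms. For each k
  the fibre lies in a tau-strip of width 2K around the graph of xi \<mapsto> omega(xi, k / lambda)
  (from v) or of its reflected translate (from u), over a xi-interval of length 3 min(M_u, M_v);
  so its measure is at most 6 K M |N| with K and N taken from either u or v.
  If instead M_w is the smallest frequency, u and v are cut into xi-strips of width comparable to
  M_w, indexed by a continuous parameter, and the estimate is averaged over that parameter.
  Finally the symmetries T(u, v, w) = T(v, u, w) = T(u(-.), w, v) place the two functions realising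
  the minimal K and the minimal |I| in the first two slots. *)

lemma esqrt_power2 [simp]: "esqrt x ^ 2 = x"
  by (cases x) (auto simp: esqrt_def ennreal_power)

lemma esqrt_of_power2 [simp]: "esqrt (x ^ 2) = x"
  by (cases x) (auto simp: esqrt_def ennreal_power)

lemma esqrt_mono: "x \<le> y \<Longrightarrow> esqrt x \<le> esqrt y"
  by (cases x; cases y) (auto simp: esqrt_def ennreal_leI real_sqrt_le_iff top_unique)

lemma le_esqrt_iff: "x \<le> esqrt y \<longleftrightarrow> x ^ 2 \<le> y"
  by (metis esqrt_mono esqrt_of_power2 esqrt_power2 power_mono zero_le)

lemma esqrt_mult: "esqrt (x * y) = esqrt x * esqrt y"
  by (metis esqrt_of_power2 esqrt_power2 power_mult_distrib)

lemma borel_measurable_esqrt [measurable]: "esqrt \<in> borel_measurable borel"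
  unfolding esqrt_def[abs_def] by measurable

lemma ennreal_sqrt_eq_esqrt: "x \<ge> 0 \<Longrightarrow> ennreal (sqrt x) = esqrt (ennreal x)"
  by (simp add: esqrt_def)

lemma nn_integral_square_le_geometric_mean:
  assumes [measurable]: "f \<in> borel_measurable M" "g \<in> borel_measurable M" "h \<in> borel_measurable M"
    and pointwise: "\<And>x. f x ^ 2 \<le> C * g x * h x"
  shows "(\<integral>\<^sup>+x. f x \<partial>M) ^ 2 \<le> C * (\<integral>\<^sup>+x. g x \<partial>M) * (\<integral>\<^sup>+x. h x \<partial>M)"
proof -
  have "(\<integral>\<^sup>+x. f x \<partial>M) \<le> (\<integral>\<^sup>+x. esqrt C * (esqrt (g x) * esqrt (h x)) \<partial>M)"
    using pointwise by (intro nn_integral_mono) (simp add: le_esqrt_iff[symmetric] esqrt_mult mult.assoc)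
  also have "\<dots> = esqrt C * (\<integral>\<^sup>+x. esqrt (g x) * esqrt (h x) \<partial>M)"
    by (rule nn_integral_cmult) measurable
  finally have "(\<integral>\<^sup>+x. f x \<partial>M) ^ 2 \<le> C * (\<integral>\<^sup>+x. esqrt (g x) * esqrt (h x) \<partial>M) ^ 2"
    by (metis esqrt_power2 power_mono power_mult_distrib zero_le)
  also have "(\<integral>\<^sup>+x. esqrt (g x) * esqrt (h x) \<partial>M) ^ 2 \<le> (\<integral>\<^sup>+x. g x \<partial>M) * (\<integral>\<^sup>+x. h x \<partial>M)"
    using Cauchy_Schwarz_nn_integral[of "\<lambda>x. esqrt (g x)" M "\<lambda>x. esqrt (h x)"] by simp
  finally show ?thesis
    by (simp add: mult_left_mono mult.assoc)
qed

section \<open>The measure space R^2 x Z\<close>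

(* ((tau, xi), k) stands for (tau, xi, k / lam); R2Z is d tau d xi times counting measure,
  the factor 1 / lam of dq being kept outside. *)
type_synonym point = "(real \<times> real) \<times> int"

(* With the discrete topology int is a second countable topological group, so that the sets of
  R2Z are the Borel sets of point and subtraction of points is measurable. *)
instance int :: second_countable_topology
proof
  have "generate_topology (range (\<lambda>k. {k})) A" for A :: "int set"
  proof -
    have "generate_topology (range (\<lambda>k. {k})) (\<Union>((\<lambda>k. {k}) ` A))"
      by (intro generate_topology.UN) (auto intro: generate_topology.Basis)
    then show ?thesis by simp
  qed
  then show "\<exists>B::int set set. countable B \<and> open = generate_topology B"
    by (intro exI[of _ "range (\<lambda>k. {k})"]) (auto simp: fun_eq_iff open_discrete)
qed

instance int :: topological_ab_group_add
  by standard (auto simp: tendsto_def eventually_nhds open_discrete intro!: exI[of _ "{_}"])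

definition R2Z :: "point measure" where
  "R2Z = lborel \<Otimes>\<^sub>M count_space UNIV"

interpretation R2Z: pair_sigma_finite "lborel :: (real \<times> real) measure" "count_space (UNIV :: int set)"
  by (intro pair_sigma_finite.intro sigma_finite_lborel sigma_finite_measure_count_space)

lemma sigma_finite_R2Z: "sigma_finite_measure R2Z"
  unfolding R2Z_def by (rule R2Z.sigma_finite_measure_axioms)

interpretation R2Z_R2Z: pair_sigma_finite R2Z R2Z
  by (intro pair_sigma_finite.intro sigma_finite_R2Z)

interpretation R_R2Z: pair_sigma_finite "lborel :: real measure" R2Z
  by (intro pair_sigma_finite.intro sigma_finite_R2Z sigma_finite_lborel)

lemma space_R2Z [simp]: "space R2Z = UNIV"
  by (simp add: R2Z_def space_pair_measure)

lemma sets_R2Z: "sets R2Z = sets (borel :: point measure)"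
proof -
  have "sets R2Z = sets ((borel :: (real \<times> real) measure) \<Otimes>\<^sub>M (borel :: int measure))"
    unfolding R2Z_def by (intro sets_pair_measure_cong) (simp_all add: sets_borel_eq_count_space)
  also have "\<dots> = sets borel"
    by (rule arg_cong[where f=sets, OF borel_prod])
  finally show ?thesis .
qed

lemma measurable_R2Z_diff [measurable (raw)]:
  assumes "f \<in> M \<rightarrow>\<^sub>M R2Z" "g \<in> M \<rightarrow>\<^sub>M R2Z"
  shows "(\<lambda>x. f x - g x) \<in> M \<rightarrow>\<^sub>M R2Z"
proof -
  have "sets (R2Z \<Otimes>\<^sub>M R2Z) = sets (borel \<Otimes>\<^sub>M borel)"
    by (intro sets_pair_measure_cong sets_R2Z)
  also have "\<dots> = sets (borel :: (point \<times> point) measure)"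
    by (rule arg_cong[where f=sets, OF borel_prod])
  finally have sets_pair: "sets (R2Z \<Otimes>\<^sub>M R2Z) = sets (borel :: (point \<times> point) measure)" .
  have "(\<lambda>p::point \<times> point. fst p - snd p) = (\<lambda>p. (fst (fst p) - fst (snd p), snd (fst p) - snd (snd p)))"
    by (simp add: fun_eq_iff)
  moreover have "continuous_on UNIV (\<lambda>p::point \<times> point. (fst (fst p) - fst (snd p), snd (fst p) - snd (snd p)))"
    by (intro continuous_intros)
  ultimately have "(\<lambda>p::point \<times> point. fst p - snd p) \<in> borel \<rightarrow>\<^sub>M borel"
    by (simp add: borel_measurable_continuous_onI)
  then have "(\<lambda>p. fst p - snd p) \<in> R2Z \<Otimes>\<^sub>M R2Z \<rightarrow>\<^sub>M R2Z"
    by (simp add: measurable_cong_sets[OF sets_pair sets_R2Z])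
  from measurable_compose[OF measurable_Pair[OF assms] this] show ?thesis
    by simp
qed

lemma measurable_R2Z_uminus [measurable (raw)]:
  "f \<in> M \<rightarrow>\<^sub>M R2Z \<Longrightarrow> (\<lambda>x. - f x) \<in> M \<rightarrow>\<^sub>M R2Z"
  using measurable_R2Z_diff[of "\<lambda>_. 0" M f] by (simp add: measurable_cong_sets[OF refl sets_R2Z])

lemma measurable_R2Z_xi [measurable]: "(\<lambda>y. snd (fst y)) \<in> R2Z \<rightarrow>\<^sub>M borel"
proof -
  have "(snd :: real \<times> real \<Rightarrow> real) \<in> borel \<rightarrow>\<^sub>M borel"
    by (intro borel_measurable_continuous_onI continuous_intros)
  then show ?thesis
    unfolding R2Z_def by measurable
qed

lemma measurable_R2Z_slices:
  assumes "\<And>k. (\<lambda>a. F (a, k)) \<in> borel_measurable borel"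
  shows "F \<in> borel_measurable R2Z"
proof -
  have "(\<lambda>y. F (fst y, snd y)) \<in> borel_measurable R2Z"
    unfolding R2Z_def
    by (rule measurable_compose_countable[where f="\<lambda>k y. F (fst y, k)"])
      (use assms in \<open>auto intro: measurable_compose[OF measurable_fst]\<close>)
  then show ?thesis
    by simp
qed

lemma nn_integral_R2Z:
  assumes "F \<in> borel_measurable R2Z"
  shows "(\<integral>\<^sup>+y. F y \<partial>R2Z) = (\<integral>\<^sup>+k. (\<integral>\<^sup>+a. F (a, k) \<partial>lborel) \<partial>count_space UNIV)"
  using assms unfolding R2Z_def by (rule R2Z.nn_integral_snd[symmetric])

lemma nn_integral_lborel_reflect:
  fixes f :: "real \<times> real \<Rightarrow> ennreal"
  assumes [measurable]: "f \<in> borel_measurable borel"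
  shows "(\<integral>\<^sup>+x. f (t - x) \<partial>lborel) = (\<integral>\<^sup>+x. f x \<partial>lborel)"
proof -
  have "(\<integral>\<^sup>+x. f x \<partial>lborel)
      = (\<integral>\<^sup>+x. f x \<partial>density (distr lborel borel (\<lambda>x. t + (-1) *\<^sub>R x)) (\<lambda>_. \<bar>-1::real\<bar> ^ DIM(real \<times> real)))"
    by (subst lborel_affine[of "-1" t, symmetric]) simp_all
  also have "\<dots> = (\<integral>\<^sup>+x. f (t - x) \<partial>lborel)"
    by (simp add: nn_integral_density nn_integral_distr)
  finally show ?thesis ..
qed

lemma nn_integral_R2Z_reflect:
  assumes F: "F \<in> borel_measurable R2Z"
  shows "(\<integral>\<^sup>+y. F (z - y) \<partial>R2Z) = (\<integral>\<^sup>+y. F y \<partial>R2Z)"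
proof -
  have slices: "(\<lambda>a. F (a, k)) \<in> borel_measurable borel" for k
    using F unfolding R2Z_def by measurable
  have "(\<lambda>y. F (z - y)) \<in> borel_measurable R2Z"
    using F by measurable
  then have "(\<integral>\<^sup>+y. F (z - y) \<partial>R2Z) = (\<integral>\<^sup>+k. (\<integral>\<^sup>+a. F (fst z - a, snd z - k) \<partial>lborel) \<partial>count_space UNIV)"
    by (simp add: nn_integral_R2Z minus_prod_def)
  also have "\<dots> = (\<integral>\<^sup>+k. (\<integral>\<^sup>+a. F (a, snd z - k) \<partial>lborel) \<partial>count_space UNIV)"
    by (simp add: nn_integral_lborel_reflect[OF slices])
  also have "\<dots> = (\<integral>\<^sup>+k. (\<integral>\<^sup>+a. F (a, k) \<partial>lborel) \<partial>count_space UNIV)"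
    by (rule nn_integral_bij_count_space[where f="\<lambda>k. \<integral>\<^sup>+a. F (a, k) \<partial>lborel"])
      (rule bij_betwI[where g="\<lambda>k. snd z - k"], auto)
  also have "\<dots> = (\<integral>\<^sup>+y. F y \<partial>R2Z)"
    using F by (rule nn_integral_R2Z[symmetric])
  finally show ?thesis .
qed

lemma nn_integral_R2Z_translate:
  assumes [measurable]: "F \<in> borel_measurable R2Z"
  shows "(\<integral>\<^sup>+y. F (y - z) \<partial>R2Z) = (\<integral>\<^sup>+y. F y \<partial>R2Z)"
proof -
  have "(\<integral>\<^sup>+y. F (y - z) \<partial>R2Z) = (\<integral>\<^sup>+y. F (- (z - y)) \<partial>R2Z)"
    by simp
  also have "\<dots> = (\<integral>\<^sup>+y. F (- y) \<partial>R2Z)"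
    by (rule nn_integral_R2Z_reflect) measurable
  also have "\<dots> = (\<integral>\<^sup>+y. F (0 - y) \<partial>R2Z)"
    by simp
  also have "\<dots> = (\<integral>\<^sup>+y. F y \<partial>R2Z)"
    by (rule nn_integral_R2Z_reflect) measurable
  finally show ?thesis .
qed

section \<open>The trilinear convolution form\<close>

abbreviation sq_integral :: "(point \<Rightarrow> ennreal) \<Rightarrow> ennreal" where
  "sq_integral u \<equiv> \<integral>\<^sup>+y. u y ^ 2 \<partial>R2Z"

definition convolution_form :: "(point \<Rightarrow> ennreal) \<Rightarrow> (point \<Rightarrow> ennreal) \<Rightarrow> (point \<Rightarrow> ennreal) \<Rightarrow> ennreal" where
  "convolution_form u v w = (\<integral>\<^sup>+y. (\<integral>\<^sup>+x. u (y - x) * v x \<partial>R2Z) * w y \<partial>R2Z)"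

lemma measurable_R2Z_nn_integral:
  assumes "case_prod f \<in> borel_measurable (N \<Otimes>\<^sub>M R2Z)"
  shows "(\<lambda>y. \<integral>\<^sup>+x. f y x \<partial>R2Z) \<in> borel_measurable N"
  using assms by (rule sigma_finite_measure.borel_measurable_nn_integral[OF sigma_finite_R2Z])

lemma convolution_form_commute:
  assumes [measurable]: "u \<in> borel_measurable R2Z" "v \<in> borel_measurable R2Z"
  shows "convolution_form u v w = convolution_form v u w"
proof -
  have "(\<integral>\<^sup>+x. u (y - x) * v x \<partial>R2Z) = (\<integral>\<^sup>+x. v (y - x) * u x \<partial>R2Z)" for y
    using nn_integral_R2Z_reflect[of "\<lambda>x. u (y - x) * v x" y] by (simp add: mult.commute)
  then show ?thesis
    unfolding convolution_form_def by simp
qed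

lemma convolution_form_rotate:
  assumes [measurable]: "u \<in> borel_measurable R2Z" "v \<in> borel_measurable R2Z" "w \<in> borel_measurable R2Z"
  shows "convolution_form u v w = convolution_form (\<lambda>y. u (- y)) w v"
proof -
  have "convolution_form u v w = (\<integral>\<^sup>+y. (\<integral>\<^sup>+x. u (y - x) * v x * w y \<partial>R2Z) \<partial>R2Z)"
    unfolding convolution_form_def by (simp add: nn_integral_multc)
  also have "\<dots> = (\<integral>\<^sup>+x. (\<integral>\<^sup>+y. u (y - x) * v x * w y \<partial>R2Z) \<partial>R2Z)"
    by (rule R2Z_R2Z.Fubini'[symmetric]) measurable
  also have "\<dots> = convolution_form (\<lambda>y. u (- y)) w v"
    unfolding convolution_form_def
  proof (intro nn_integral_cong)
    fix x
    have "(\<integral>\<^sup>+y. (u (y - x) * w y) * v x \<partial>R2Z) = (\<integral>\<^sup>+y. u (y - x) * w y \<partial>R2Z) * v x"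
      by (rule nn_integral_multc) measurable
    then show "(\<integral>\<^sup>+y. u (y - x) * v x * w y \<partial>R2Z) = (\<integral>\<^sup>+y. u (- (x - y)) * w y \<partial>R2Z) * v x"
      by (simp add: mult_ac)
  qed
  finally show ?thesis .
qed

(* Cauchy-Schwarz in x against the indicator of the fibre, then in y. *)
lemma convolution_form_square_le:
  assumes [measurable]: "u \<in> borel_measurable R2Z" "v \<in> borel_measurable R2Z" "w \<in> borel_measurable R2Z"
    and fibre: "\<And>y. (\<integral>\<^sup>+x. indicator {x. u (y - x) \<noteq> 0 \<and> v x \<noteq> 0} x \<partial>R2Z) \<le> E"
  shows "convolution_form u v w ^ 2 \<le> E * sq_integral u * sq_integral v * sq_integral w"
proof -
  define P where "P y = (\<integral>\<^sup>+x. u (y - x) * v x \<partial>R2Z)" for y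
  define G where "G y = (\<integral>\<^sup>+x. u (y - x) ^ 2 * v x ^ 2 \<partial>R2Z)" for y
  have [measurable]: "P \<in> borel_measurable R2Z" "G \<in> borel_measurable R2Z"
    unfolding P_def G_def by (rule measurable_R2Z_nn_integral, measurable)+
  have P_sq: "P y ^ 2 \<le> G y * E" for y
  proof -
    let ?S = "{x. u (y - x) \<noteq> 0 \<and> v x \<noteq> 0}"
    have "?S = {x \<in> space R2Z. u (y - x) \<noteq> 0 \<and> v x \<noteq> 0}"
      by simp
    then have [measurable]: "?S \<in> sets R2Z"
      by (simp only:) measurable
    have "P y = (\<integral>\<^sup>+x. (u (y - x) * v x) * indicator ?S x \<partial>R2Z)"
      unfolding P_def by (intro nn_integral_cong) (auto simp: indicator_def)
    also have "\<dots> ^ 2 \<le> G y * (\<integral>\<^sup>+x. indicator ?S x ^ 2 \<partial>R2Z)"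
      unfolding G_def power_mult_distrib[symmetric]
      by (rule Cauchy_Schwarz_nn_integral) measurable
    also have "(\<integral>\<^sup>+x. indicator ?S x ^ 2 \<partial>R2Z) = (\<integral>\<^sup>+x. indicator ?S x \<partial>R2Z)"
      by (intro nn_integral_cong) (simp split: split_indicator)
    finally show ?thesis
      using fibre[of y] by (meson mult_left_mono order_trans zero_le)
  qed
  have "(\<integral>\<^sup>+y. G y \<partial>R2Z) = (\<integral>\<^sup>+x. (\<integral>\<^sup>+y. u (y - x) ^ 2 * v x ^ 2 \<partial>R2Z) \<partial>R2Z)"
    unfolding G_def by (rule R2Z_R2Z.Fubini'[symmetric]) measurable
  also have "\<dots> = (\<integral>\<^sup>+x. sq_integral u * v x ^ 2 \<partial>R2Z)"
  proof -
    have "(\<integral>\<^sup>+y. u (y - x) ^ 2 \<partial>R2Z) = sq_integral u" for x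
      by (rule nn_integral_R2Z_translate[of "\<lambda>y. u y ^ 2"]) measurable
    then show ?thesis
      by (simp add: nn_integral_multc)
  qed
  also have "\<dots> = sq_integral u * sq_integral v"
    by (simp add: nn_integral_cmult)
  finally have G_integral: "(\<integral>\<^sup>+y. G y \<partial>R2Z) = sq_integral u * sq_integral v" .
  have "convolution_form u v w ^ 2 = (\<integral>\<^sup>+y. P y * w y \<partial>R2Z) ^ 2"
    unfolding convolution_form_def P_def ..
  also have "\<dots> \<le> (\<integral>\<^sup>+y. P y ^ 2 \<partial>R2Z) * sq_integral w"
    by (rule Cauchy_Schwarz_nn_integral) measurable
  also have "\<dots> \<le> (\<integral>\<^sup>+y. G y * E \<partial>R2Z) * sq_integral w"
    by (intro mult_right_mono nn_integral_mono P_sq) simp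
  also have "(\<integral>\<^sup>+y. G y * E \<partial>R2Z) = sq_integral u * sq_integral v * E"
    by (simp add: nn_integral_multc G_integral)
  finally show ?thesis
    by (simp add: mult_ac)
qed

section \<open>Localisation in xi\<close>

lemma emeasure_lborel_abs_le:
  assumes "r \<ge> 0" "\<bar>s\<bar> = 1"
  shows "emeasure lborel {c. \<bar>a - s * c\<bar> \<le> r} = ennreal (2 * r)"
proof -
  have "{c. \<bar>a - s * c\<bar> \<le> r} = {s * a - r .. s * a + r}"
    using assms(2) by (auto simp: abs_if split: if_splits)
  then show ?thesis
    using assms(1) by simp
qed

definition cutoff :: "real \<Rightarrow> real \<Rightarrow> (point \<Rightarrow> ennreal) \<Rightarrow> point \<Rightarrow> ennreal" where
  "cutoff r c u y = u y * indicator {y. \<bar>snd (fst y) - c\<bar> \<le> r} y"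

lemma measurable_cutoff [measurable (raw)]:
  assumes "u \<in> borel_measurable R2Z" "f \<in> M \<rightarrow>\<^sub>M borel" "g \<in> M \<rightarrow>\<^sub>M R2Z"
  shows "(\<lambda>x. cutoff r (f x) u (g x)) \<in> borel_measurable M"
  unfolding cutoff_def using assms by measurable

lemma nn_integral_sq_integral_cutoff:
  assumes [measurable]: "u \<in> borel_measurable R2Z" and "r \<ge> 0" "\<bar>s\<bar> = 1"
  shows "(\<integral>\<^sup>+c. sq_integral (cutoff r (s * c) u) \<partial>lborel) = ennreal (2 * r) * sq_integral u"
proof -
  have sq: "cutoff r (s * c) u y ^ 2 = u y ^ 2 * indicator {c. \<bar>snd (fst y) - s * c\<bar> \<le> r} c" for c y
    by (simp add: cutoff_def power_mult_distrib split: split_indicator)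
  have "(\<integral>\<^sup>+c. sq_integral (cutoff r (s * c) u) \<partial>lborel)
      = (\<integral>\<^sup>+y. (\<integral>\<^sup>+c. cutoff r (s * c) u y ^ 2 \<partial>lborel) \<partial>R2Z)"
    by (rule R_R2Z.Fubini'[symmetric]) measurable
  also have "\<dots> = (\<integral>\<^sup>+y. (\<integral>\<^sup>+c. u y ^ 2 * indicator {c. \<bar>snd (fst y) - s * c\<bar> \<le> r} c \<partial>lborel) \<partial>R2Z)"
    by (simp only: sq)
  also have "\<dots> = (\<integral>\<^sup>+y. ennreal (2 * r) * u y ^ 2 \<partial>R2Z)"
    using assms(2,3) by (simp add: nn_integral_cmult_indicator emeasure_lborel_abs_le, simp add: mult.commute)
  also have "\<dots> = ennreal (2 * r) * sq_integral u"
    by (rule nn_integral_cmult) measurable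
  finally show ?thesis .
qed

(* For y in the support of w and |xi x - c| <= L, the point y - x lies in the strip
  |xi + c| <= 2 L, so integrating the cut-off forms over c gives back 2 L times the form. *)
lemma convolution_form_cutoff_integral:
  assumes [measurable]: "u \<in> borel_measurable R2Z" "v \<in> borel_measurable R2Z" "w \<in> borel_measurable R2Z"
    and "L \<ge> 0" and w_support: "\<And>y. w y \<noteq> 0 \<Longrightarrow> \<bar>snd (fst y)\<bar> \<le> L"
  shows "ennreal (2 * L) * convolution_form u v w
    = (\<integral>\<^sup>+c. convolution_form (cutoff (2 * L) (- c) u) (cutoff L c v) w \<partial>lborel)"
proof -
  define F where "F c y x = cutoff (2 * L) (- c) u (y - x) * cutoff L c v x * w y" for c y x
  have pointwise: "(\<integral>\<^sup>+c. F c y x \<partial>lborel) = ennreal (2 * L) * (u (y - x) * v x * w y)" for y x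
  proof (cases "w y = 0")
    case False
    then have "\<bar>snd (fst y)\<bar> \<le> L"
      by (rule w_support)
    then have "F c y x = (u (y - x) * v x * w y) * indicator {c. \<bar>snd (fst x) - c\<bar> \<le> L} c" for c
      by (auto simp: F_def cutoff_def indicator_def abs_le_iff)
    then have "(\<integral>\<^sup>+c. F c y x \<partial>lborel) = (u (y - x) * v x * w y) * emeasure lborel {c. \<bar>snd (fst x) - c\<bar> \<le> L}"
      by (simp add: nn_integral_cmult_indicator)
    then show ?thesis
      using emeasure_lborel_abs_le[of L 1 "snd (fst x)"] \<open>L \<ge> 0\<close> by (simp add: mult.commute)
  qed (simp add: F_def)
  have "ennreal (2 * L) * convolution_form u v w
      = (\<integral>\<^sup>+y. (\<integral>\<^sup>+x. ennreal (2 * L) * (u (y - x) * v x * w y) \<partial>R2Z) \<partial>R2Z)"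
    unfolding convolution_form_def
  proof (subst nn_integral_cmult[symmetric], measurable, intro nn_integral_cong)
    fix y
    have "(\<integral>\<^sup>+x. ennreal (2 * L) * (u (y - x) * v x * w y) \<partial>R2Z) = ennreal (2 * L) * (\<integral>\<^sup>+x. u (y - x) * v x * w y \<partial>R2Z)"
      by (rule nn_integral_cmult) measurable
    also have "(\<integral>\<^sup>+x. u (y - x) * v x * w y \<partial>R2Z) = (\<integral>\<^sup>+x. u (y - x) * v x \<partial>R2Z) * w y"
      by (rule nn_integral_multc) measurable
    finally show "ennreal (2 * L) * ((\<integral>\<^sup>+x. u (y - x) * v x \<partial>R2Z) * w y)
        = (\<integral>\<^sup>+x. ennreal (2 * L) * (u (y - x) * v x * w y) \<partial>R2Z)" ..
  qed
  also have "\<dots> = (\<integral>\<^sup>+y. (\<integral>\<^sup>+x. (\<integral>\<^sup>+c. F c y x \<partial>lborel) \<partial>R2Z) \<partial>R2Z)"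
    by (simp add: pointwise)
  also have "\<dots> = (\<integral>\<^sup>+y. (\<integral>\<^sup>+c. (\<integral>\<^sup>+x. F c y x \<partial>R2Z) \<partial>lborel) \<partial>R2Z)"
    by (intro nn_integral_cong R_R2Z.Fubini') (unfold F_def, measurable)
  also have "\<dots> = (\<integral>\<^sup>+c. (\<integral>\<^sup>+y. (\<integral>\<^sup>+x. F c y x \<partial>R2Z) \<partial>R2Z) \<partial>lborel)"
    by (rule R_R2Z.Fubini')
      (simp only: case_prod_beta', rule measurable_R2Z_nn_integral, unfold F_def, measurable)
  also have "\<dots> = (\<integral>\<^sup>+c. convolution_form (cutoff (2 * L) (- c) u) (cutoff L c v) w \<partial>lborel)"
    unfolding convolution_form_def F_def by (simp add: nn_integral_multc)
  finally show ?thesis .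
qed

(* Each cut-off form has fibres in a xi-window of width 2 L; Cauchy-Schwarz in c then costs
  only the ratio 2 of the widths of the two cut-offs. *)
lemma convolution_form_square_le_localised:
  assumes [measurable]: "u \<in> borel_measurable R2Z" "v \<in> borel_measurable R2Z" "w \<in> borel_measurable R2Z"
    and "L > 0" and w_support: "\<And>y. w y \<noteq> 0 \<Longrightarrow> \<bar>snd (fst y)\<bar> \<le> L"
    and fibre: "\<And>c y. (\<integral>\<^sup>+x. indicator {x. u (y - x) \<noteq> 0 \<and> v x \<noteq> 0 \<and> \<bar>snd (fst x) - c\<bar> \<le> L} x \<partial>R2Z) \<le> E"
  shows "convolution_form u v w ^ 2 \<le> 2 * E * sq_integral u * sq_integral v * sq_integral w"
proof -
  define a where "a = ennreal (2 * L)"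
  have cutoff_bound: "convolution_form (cutoff (2 * L) (- c) u) (cutoff L c v) w ^ 2
      \<le> (E * sq_integral w) * sq_integral (cutoff (2 * L) (- c) u) * sq_integral (cutoff L c v)" for c
  proof -
    have "(\<integral>\<^sup>+x. indicator {x. cutoff (2 * L) (- c) u (y - x) \<noteq> 0 \<and> cutoff L c v x \<noteq> 0} x \<partial>R2Z)
        \<le> (\<integral>\<^sup>+x. indicator {x. u (y - x) \<noteq> 0 \<and> v x \<noteq> 0 \<and> \<bar>snd (fst x) - c\<bar> \<le> L} x \<partial>R2Z)" for y
      by (intro nn_integral_mono) (auto simp: cutoff_def split: split_indicator)
    then have "convolution_form (cutoff (2 * L) (- c) u) (cutoff L c v) w ^ 2
        \<le> E * sq_integral (cutoff (2 * L) (- c) u) * sq_integral (cutoff L c v) * sq_integral w"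
      by (intro convolution_form_square_le order_trans[OF _ fibre]) measurable
    then show ?thesis
      by (simp add: mult_ac)
  qed
  have "(a * convolution_form u v w) ^ 2
      = (\<integral>\<^sup>+c. convolution_form (cutoff (2 * L) (- c) u) (cutoff L c v) w \<partial>lborel) ^ 2"
    unfolding a_def using \<open>L > 0\<close> w_support by (simp add: convolution_form_cutoff_integral)
  also have "\<dots> \<le> (E * sq_integral w) * (\<integral>\<^sup>+c. sq_integral (cutoff (2 * L) (- c) u) \<partial>lborel)
      * (\<integral>\<^sup>+c. sq_integral (cutoff L c v) \<partial>lborel)"
  proof (rule nn_integral_square_le_geometric_mean[OF _ _ _ cutoff_bound])
    have [measurable]: "(\<lambda>p. \<integral>\<^sup>+x. cutoff (2 * L) (- fst p) u (snd p - x) * cutoff L (fst p) v x \<partial>R2Z)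
        \<in> borel_measurable (lborel \<Otimes>\<^sub>M R2Z)"
      by (rule measurable_R2Z_nn_integral) measurable
    show "(\<lambda>c. convolution_form (cutoff (2 * L) (- c) u) (cutoff L c v) w) \<in> borel_measurable lborel"
      unfolding convolution_form_def by (rule measurable_R2Z_nn_integral) measurable
    show "(\<lambda>c. sq_integral (cutoff (2 * L) (- c) u)) \<in> borel_measurable lborel"
      by (rule measurable_R2Z_nn_integral) measurable
    show "(\<lambda>c. sq_integral (cutoff L c v)) \<in> borel_measurable lborel"
      by (rule measurable_R2Z_nn_integral) measurable
  qed
  also have "\<dots> = (E * sq_integral w) * (2 * a * sq_integral u) * (a * sq_integral v)"
    using nn_integral_sq_integral_cutoff[of u "2 * L" "-1"] nn_integral_sq_integral_cutoff[of v L 1] \<open>L > 0\<close>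
    by (simp add: a_def ennreal_mult)
  also have "\<dots> = a ^ 2 * (2 * E * sq_integral u * sq_integral v * sq_integral w)"
    by (simp add: power2_eq_square mult_ac)
  finally have "a ^ 2 * convolution_form u v w ^ 2 \<le> a ^ 2 * (2 * E * sq_integral u * sq_integral v * sq_integral w)"
    by (simp add: power_mult_distrib)
  moreover have "a ^ 2 \<noteq> 0" "a ^ 2 \<noteq> top"
    unfolding a_def using \<open>L > 0\<close> by (auto simp: ennreal_power)
  ultimately show ?thesis
    using ennreal_mult_le_mult_iff by blast
qed

section \<open>Fibres of functions supported near the characteristic surface\<close>

abbreviation ecard :: "int set \<Rightarrow> ennreal" where
  "ecard N \<equiv> emeasure (count_space UNIV) N"

lemma ecard_reflect: "ecard {k. a - k \<in> N} = ecard N"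
proof -
  have "bij_betw (\<lambda>k. a - k) {k. a - k \<in> N} N"
    by (rule bij_betwI[where g="\<lambda>k. a - k"]) auto
  then show ?thesis
    by (simp add: emeasure_count_space bij_betw_finite bij_betw_same_card)
qed

lemma nn_integral_indicator_le_strip:
  assumes [measurable]: "\<And>k. (\<lambda>\<xi>. \<phi> \<xi> k) \<in> borel_measurable borel"
    and "K \<ge> 0" "\<alpha> \<le> \<beta>"
    and strip: "\<And>\<tau> \<xi> k. S ((\<tau>, \<xi>), k) \<Longrightarrow> k \<in> A \<and> \<xi> \<in> {\<alpha>..\<beta>} \<and> \<bar>\<phi> \<xi> k - \<tau>\<bar> \<le> K"
  shows "(\<integral>\<^sup>+y. indicator {y. S y} y \<partial>R2Z) \<le> ennreal (2 * K) * ennreal (\<beta> - \<alpha>) * ecard A"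
proof -
  define G :: "point \<Rightarrow> ennreal" where
    "G y = indicator A (snd y) * indicator {\<alpha>..\<beta>} (snd (fst y))
      * indicator {\<tau>. \<bar>\<phi> (snd (fst y)) (snd y) - \<tau>\<bar> \<le> K} (fst (fst y))" for y
  have slices: "(\<lambda>a. G (a, k)) \<in> borel_measurable borel" for k
  proof -
    have [measurable]: "(fst :: real \<times> real \<Rightarrow> real) \<in> borel \<rightarrow>\<^sub>M borel" "(snd :: real \<times> real \<Rightarrow> real) \<in> borel \<rightarrow>\<^sub>M borel"
      by (intro borel_measurable_continuous_onI continuous_intros)+
    show ?thesis
      unfolding G_def by (simp, measurable)
  qed
  have "(\<integral>\<^sup>+y. indicator {y. S y} y \<partial>R2Z) \<le> (\<integral>\<^sup>+y. G y \<partial>R2Z)"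
    using strip by (intro nn_integral_mono) (auto simp: G_def split: split_indicator)
  also have "\<dots> = (\<integral>\<^sup>+k. (\<integral>\<^sup>+a. G (a, k) \<partial>(lborel \<Otimes>\<^sub>M lborel)) \<partial>count_space UNIV)"
    by (simp add: nn_integral_R2Z measurable_R2Z_slices[OF slices] lborel_prod)
  also have "\<dots> = (\<integral>\<^sup>+k. (\<integral>\<^sup>+\<xi>. (\<integral>\<^sup>+\<tau>. G ((\<tau>, \<xi>), k) \<partial>lborel) \<partial>lborel) \<partial>count_space UNIV)"
    using slices by (intro nn_integral_cong lborel_pair.nn_integral_snd[symmetric]) (simp add: lborel_prod case_prod_beta)
  also have "\<dots> = (\<integral>\<^sup>+k. (\<integral>\<^sup>+\<xi>. indicator A k * ennreal (2 * K) * indicator {\<alpha>..\<beta>} \<xi> \<partial>lborel) \<partial>count_space UNIV)"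
  proof (intro nn_integral_cong)
    fix k \<xi>
    have "(\<integral>\<^sup>+\<tau>. G ((\<tau>, \<xi>), k) \<partial>lborel)
        = (indicator A k * indicator {\<alpha>..\<beta>} \<xi>) * emeasure lborel {\<tau>. \<bar>\<phi> \<xi> k - \<tau>\<bar> \<le> K}"
      by (simp add: G_def nn_integral_cmult_indicator)
    then show "(\<integral>\<^sup>+\<tau>. G ((\<tau>, \<xi>), k) \<partial>lborel) = indicator A k * ennreal (2 * K) * indicator {\<alpha>..\<beta>} \<xi>"
      using emeasure_lborel_abs_le[of K 1 "\<phi> \<xi> k"] \<open>K \<ge> 0\<close> by (simp add: mult_ac)
  qed
  also have "\<dots> = (\<integral>\<^sup>+k. (ennreal (2 * K) * ennreal (\<beta> - \<alpha>)) * indicator A k \<partial>count_space UNIV)"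
    using \<open>\<alpha> \<le> \<beta>\<close> by (intro nn_integral_cong) (simp add: nn_integral_cmult_indicator, simp add: mult_ac)
  also have "\<dots> = ennreal (2 * K) * ennreal (\<beta> - \<alpha>) * ecard A"
    by (simp add: nn_integral_cmult_indicator)
  finally show ?thesis .
qed

(* The support condition of D_{lam,M,<=K} intersected with {q \<in> I}, in the coordinates of point,
  using |sigma| <= japan sigma; N plays the role of {k. k / lam \<in> I}. *)
definition supported_in :: "real \<Rightarrow> real \<Rightarrow> real \<Rightarrow> int set \<Rightarrow> (point \<Rightarrow> ennreal) \<Rightarrow> bool" where
  "supported_in lam M K N u \<longleftrightarrow> (\<forall>\<tau> \<xi> k. u ((\<tau>, \<xi>), k) \<noteq> 0 \<longrightarrow>
      \<bar>\<xi>\<bar> \<le> 3 * M / 2 \<and> \<bar>\<tau> - omega \<xi> (of_int k / lam)\<bar> \<le> K \<and> k \<in> N)"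

lemma supported_inD:
  assumes "supported_in lam M K N u" "u y \<noteq> 0"
  shows "\<bar>snd (fst y)\<bar> \<le> 3 * M / 2" "\<bar>fst (fst y) - omega (snd (fst y)) (of_int (snd y) / lam)\<bar> \<le> K"
    "snd y \<in> N"
proof -
  obtain \<tau> \<xi> k where "y = ((\<tau>, \<xi>), k)"
    by (metis prod.collapse)
  then show "\<bar>snd (fst y)\<bar> \<le> 3 * M / 2" "\<bar>fst (fst y) - omega (snd (fst y)) (of_int (snd y) / lam)\<bar> \<le> K"
      "snd y \<in> N"
    using assms unfolding supported_in_def by simp_all
qed

lemma borel_measurable_omega [measurable]: "(\<lambda>\<xi>. omega \<xi> q) \<in> borel_measurable borel"
  unfolding omega_def by measurable

lemma fibre_measure_le:
  assumes u: "supported_in lam Mu Ku Nu u" and v: "supported_in lam Mv Kv Nv v"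
    and "Ku \<ge> 0" "Kv \<ge> 0" "\<alpha> \<le> \<beta>"
    and fibre: "\<And>x. P x \<Longrightarrow> u (y - x) \<noteq> 0 \<and> v x \<noteq> 0 \<and> snd (fst x) \<in> {\<alpha>..\<beta>}"
  shows "(\<integral>\<^sup>+x. indicator {x. P x} x \<partial>R2Z)
    \<le> ennreal (2 * min Ku Kv) * ennreal (\<beta> - \<alpha>) * min (ecard Nu) (ecard Nv)"
proof -
  obtain \<tau>' \<xi>' k' where y: "y = ((\<tau>', \<xi>'), k')"
    by (metis prod.collapse)
  have by_u: "(\<integral>\<^sup>+x. indicator {x. P x} x \<partial>R2Z) \<le> ennreal (2 * Ku) * ennreal (\<beta> - \<alpha>) * ecard A"
    if "\<And>\<tau> \<xi> k. P ((\<tau>, \<xi>), k) \<Longrightarrow> k \<in> A" for A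
  proof (rule nn_integral_indicator_le_strip[where \<phi>="\<lambda>\<xi> k. \<tau>' - omega (\<xi>' - \<xi>) (of_int (k' - k) / lam)"])
    fix \<tau> \<xi> k
    assume P: "P ((\<tau>, \<xi>), k)"
    then have "u ((\<tau>' - \<tau>, \<xi>' - \<xi>), k' - k) \<noteq> 0"
      using fibre[OF P] by (simp add: y)
    then have "\<bar>(\<tau>' - \<tau>) - omega (\<xi>' - \<xi>) (of_int (k' - k) / lam)\<bar> \<le> Ku"
      using u unfolding supported_in_def by blast
    then show "k \<in> A \<and> \<xi> \<in> {\<alpha>..\<beta>} \<and> \<bar>\<tau>' - omega (\<xi>' - \<xi>) (of_int (k' - k) / lam) - \<tau>\<bar> \<le> Ku"
      using that[OF P] fibre[OF P] by (simp add: algebra_simps)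
  qed (use \<open>Ku \<ge> 0\<close> \<open>\<alpha> \<le> \<beta>\<close> in \<open>simp_all\<close>)
  have by_v: "(\<integral>\<^sup>+x. indicator {x. P x} x \<partial>R2Z) \<le> ennreal (2 * Kv) * ennreal (\<beta> - \<alpha>) * ecard A"
    if "\<And>\<tau> \<xi> k. P ((\<tau>, \<xi>), k) \<Longrightarrow> k \<in> A" for A
  proof (rule nn_integral_indicator_le_strip[where \<phi>="\<lambda>\<xi> k. omega \<xi> (of_int k / lam)"])
    fix \<tau> \<xi> k
    assume "P ((\<tau>, \<xi>), k)"
    then show "k \<in> A \<and> \<xi> \<in> {\<alpha>..\<beta>} \<and> \<bar>omega \<xi> (of_int k / lam) - \<tau>\<bar> \<le> Kv"
      using that fibre[of "((\<tau>, \<xi>), k)"] v by (auto simp: supported_in_def abs_minus_commute)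
  qed (use \<open>Kv \<ge> 0\<close> \<open>\<alpha> \<le> \<beta>\<close> in \<open>simp_all\<close>)
  have in_Nu: "k \<in> {k. k' - k \<in> Nu}" and in_Nv: "k \<in> Nv" if "P ((\<tau>, \<xi>), k)" for \<tau> \<xi> k
    using that fibre[of "((\<tau>, \<xi>), k)"] u v by (auto simp: supported_in_def y)
  show ?thesis
    using by_u[OF in_Nu] by_u[OF in_Nv] by_v[OF in_Nu] by_v[OF in_Nv]
    by (cases "Ku \<le> Kv"; cases "ecard Nu \<le> ecard Nv") (simp_all add: ecard_reflect min_def)
qed

lemma supported_in_reflect:
  assumes "supported_in lam M K N u"
  shows "supported_in lam M K {k. - k \<in> N} (\<lambda>y. u (- y))"
  unfolding supported_in_def
proof (intro allI impI)
  fix \<tau> \<xi> k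
  assume "u (- ((\<tau>, \<xi>), k)) \<noteq> 0"
  then have "u ((- \<tau>, - \<xi>), - k) \<noteq> 0"
    by simp
  then have "\<bar>- \<xi>\<bar> \<le> 3 * M / 2 \<and> \<bar>- \<tau> - omega (- \<xi>) (of_int (- k) / lam)\<bar> \<le> K \<and> - k \<in> N"
    using assms unfolding supported_in_def by blast
  moreover have "omega (- \<xi>) (of_int (- k) / lam) = - omega \<xi> (of_int k / lam)"
    by (simp add: omega_def)
  ultimately show "\<bar>\<xi>\<bar> \<le> 3 * M / 2 \<and> \<bar>\<tau> - omega \<xi> (of_int k / lam)\<bar> \<le> K \<and> k \<in> {k. - k \<in> N}"
    by (simp add: abs_minus_commute)
qed

lemma ennreal_strip_bound:
  assumes "K \<ge> 0" "M \<ge> 0"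
  shows "ennreal (2 * K) * ennreal (3 * M) * N = 6 * ennreal M * ennreal K * N"
  using assms by (simp add: ennreal_mult' mult_ac)

(* Only u and v enter the fibres. If w has the smallest frequency the xi-localisation comes from w;
  otherwise the support of v, or of u(y - .), confines xi to an interval of length 3 min Mu Mv. *)
lemma convolution_form_square_le_supported:
  assumes [measurable]: "u \<in> borel_measurable R2Z" "v \<in> borel_measurable R2Z" "w \<in> borel_measurable R2Z"
    and u: "supported_in lam Mu Ku Nu u" and v: "supported_in lam Mv Kv Nv v" and w: "supported_in lam Mw Kw Nw w"
    and "Mu > 0" "Mv > 0" "Mw > 0" "Ku \<ge> 0" "Kv \<ge> 0"
  shows "convolution_form u v w ^ 2 \<le> 12 * ennreal (min Mu (min Mv Mw)) * ennreal (min Ku Kv)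
    * min (ecard Nu) (ecard Nv) * sq_integral u * sq_integral v * sq_integral w"
proof -
  define K where "K = min Ku Kv"
  define N where "N = min (ecard Nu) (ecard Nv)"
  have "K \<ge> 0"
    using \<open>Ku \<ge> 0\<close> \<open>Kv \<ge> 0\<close> by (simp add: K_def)
  have strip_fibre: "(\<integral>\<^sup>+x. indicator {x. P x} x \<partial>R2Z) \<le> ennreal (2 * K) * ennreal (3 * M) * N"
    if "M \<ge> 0" and "\<And>x. P x \<Longrightarrow> u (y - x) \<noteq> 0 \<and> v x \<noteq> 0 \<and> snd (fst x) \<in> {\<alpha>..\<alpha> + 3 * M}" for P y \<alpha> M
    using fibre_measure_le[OF u v \<open>Ku \<ge> 0\<close> \<open>Kv \<ge> 0\<close>, of \<alpha> "\<alpha> + 3 * M" P y] that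
    by (simp add: K_def N_def)
  show ?thesis
  proof (cases "Mw \<le> Mu \<and> Mw \<le> Mv")
    case True
    define L where "L = 3 * Mw / 2"
    have "convolution_form u v w ^ 2
        \<le> 2 * (ennreal (2 * K) * ennreal (3 * Mw) * N) * sq_integral u * sq_integral v * sq_integral w"
    proof (rule convolution_form_square_le_localised[where L=L])
      show "\<bar>snd (fst y)\<bar> \<le> L" if "w y \<noteq> 0" for y
        using supported_inD(1)[OF w that] by (simp add: L_def)
      show "(\<integral>\<^sup>+x. indicator {x. u (y - x) \<noteq> 0 \<and> v x \<noteq> 0 \<and> \<bar>snd (fst x) - c\<bar> \<le> L} x \<partial>R2Z)
          \<le> ennreal (2 * K) * ennreal (3 * Mw) * N" for c y
      proof -
        have "c - L + 3 * Mw = c + L"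
          by (simp add: L_def)
        then show ?thesis
          using \<open>Mw > 0\<close> by (intro strip_fibre[where \<alpha>="c - L" and y=y]) (auto simp: abs_le_iff)
      qed
    qed (use \<open>Mw > 0\<close> in \<open>simp_all add: L_def\<close>)
    also have "\<dots> = 12 * ennreal Mw * ennreal K * N * sq_integral u * sq_integral v * sq_integral w"
      unfolding ennreal_strip_bound[OF \<open>K \<ge> 0\<close> less_imp_le[OF \<open>Mw > 0\<close>]] by (simp add: mult_ac)
    finally show ?thesis
      using True by (simp add: K_def N_def)
  next
    case False
    define M where "M = min Mu Mv"
    have "M > 0"
      using \<open>Mu > 0\<close> \<open>Mv > 0\<close> by (simp add: M_def)
    have window: "\<exists>\<alpha>. \<forall>x. u (y - x) \<noteq> 0 \<and> v x \<noteq> 0 \<longrightarrow> snd (fst x) \<in> {\<alpha>..\<alpha> + 3 * M}" for y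
    proof (cases "Mv \<le> Mu")
      case True
      have "snd (fst x) \<in> {- (3 * Mv / 2) .. - (3 * Mv / 2) + 3 * M}" if "v x \<noteq> 0" for x
        using supported_inD(1)[OF v that, unfolded abs_le_iff] True by (simp add: M_def)
      then show ?thesis
        by blast
    next
      case False
      have "snd (fst x) \<in> {snd (fst y) - 3 * Mu / 2 .. snd (fst y) - 3 * Mu / 2 + 3 * M}"
        if "u (y - x) \<noteq> 0" for x
        using supported_inD(1)[OF u that, unfolded abs_le_iff] False by (simp add: M_def)
      then show ?thesis
        by blast
    qed
    have "convolution_form u v w ^ 2
        \<le> ennreal (2 * K) * ennreal (3 * M) * N * sq_integral u * sq_integral v * sq_integral w"
    proof (rule convolution_form_square_le)
      fix y
      obtain \<alpha> where \<alpha>: "\<forall>x. u (y - x) \<noteq> 0 \<and> v x \<noteq> 0 \<longrightarrow> snd (fst x) \<in> {\<alpha>..\<alpha> + 3 * M}"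
        using window by blast
      show "(\<integral>\<^sup>+x. indicator {x. u (y - x) \<noteq> 0 \<and> v x \<noteq> 0} x \<partial>R2Z) \<le> ennreal (2 * K) * ennreal (3 * M) * N"
        by (rule strip_fibre[where \<alpha>=\<alpha> and y=y]) (use \<open>M > 0\<close> in simp, use \<alpha> in blast)
    qed measurable
    also have "\<dots> \<le> 12 * ennreal M * ennreal K * N * sq_integral u * sq_integral v * sq_integral w"
      unfolding ennreal_strip_bound[OF \<open>K \<ge> 0\<close> less_imp_le[OF \<open>M > 0\<close>]]
      by (intro mult_right_mono) auto
    moreover have "min Mu (min Mv Mw) = M"
      using False by (auto simp: M_def min_def)
    ultimately show ?thesis
      by (simp only: K_def N_def)
  qed
qed

lemma min3_cases:
  fixes a1 a2 a3 :: "'a::linorder" and b1 b2 b3 :: "'b::linorder"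
  obtains "min a1 a2 \<le> a3" "min b1 b2 \<le> b3"
    | "min a1 a3 \<le> a2" "min b1 b3 \<le> b2"
    | "min a2 a3 \<le> a1" "min b2 b3 \<le> b1"
proof -
  have drop3: "min x1 x2 \<le> x3 \<or> (min x1 x3 \<le> x2 \<and> min x2 x3 \<le> x1)" for x1 x2 x3 :: "'c::linorder"
    by (auto simp: min_le_iff_disj not_le dest: less_imp_le)
  have drop12: "min x1 x3 \<le> x2 \<or> min x2 x3 \<le> x1" for x1 x2 x3 :: "'c::linorder"
    by (auto simp: min_le_iff_disj)
  show ?thesis
    using drop3[of a1 a2 a3] drop3[of b1 b2 b3] drop12[of a1 a3 a2] drop12[of b1 b3 b2] that by blast
qed

(* Some index realises neither min K nor min |N|; the symmetries of the form move it to the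
  third slot. *)
lemma convolution_form_square_bound:
  assumes [measurable]: "h1 \<in> borel_measurable R2Z" "h2 \<in> borel_measurable R2Z" "h3 \<in> borel_measurable R2Z"
    and h1: "supported_in lam M1 K1 N1 h1" and h2: "supported_in lam M2 K2 N2 h2" and h3: "supported_in lam M3 K3 N3 h3"
    and M: "M1 > 0" "M2 > 0" "M3 > 0" and K: "K1 \<ge> 0" "K2 \<ge> 0" "K3 \<ge> 0"
  shows "convolution_form h1 h2 h3 ^ 2 \<le> 12 * ennreal (min M1 (min M2 M3)) * ennreal (min K1 (min K2 K3))
    * min (ecard N1) (min (ecard N2) (ecard N3)) * sq_integral h1 * sq_integral h2 * sq_integral h3"
proof -
  have ecard_N: "ecard {k. - k \<in> N1} = ecard N1" "ecard {k. - k \<in> N2} = ecard N2"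
    using ecard_reflect[of 0] by simp_all
  have sq_reflect: "sq_integral (\<lambda>y. h (- y)) = sq_integral h" if [measurable]: "h \<in> borel_measurable R2Z" for h
    using nn_integral_R2Z_reflect[of "\<lambda>y. h y ^ 2" 0] by simp
  show ?thesis
  proof (cases rule: min3_cases[of K1 K2 K3 "ecard N1" "ecard N2" "ecard N3"])
    case 1
    then have "min K1 (min K2 K3) = min K1 K2"
      "min (ecard N1) (min (ecard N2) (ecard N3)) = min (ecard N1) (ecard N2)"
      by (auto simp: min_def split: if_split_asm)
    then show ?thesis
      using convolution_form_square_le_supported[OF assms(1-3) h1 h2 h3 M K(1,2)] by (simp only:)
  next
    case 2
    then have min_eqs: "min K1 (min K2 K3) = min K1 K3"
      "min (ecard N1) (min (ecard N2) (ecard N3)) = min (ecard N1) (ecard N3)"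
      "min M1 (min M3 M2) = min M1 (min M2 M3)"
      by (auto simp: min_def split: if_split_asm)
    have rotate: "convolution_form h1 h2 h3 = convolution_form (\<lambda>y. h1 (- y)) h3 h2"
      by (rule convolution_form_rotate) measurable
    have "convolution_form h1 h2 h3 ^ 2 \<le> 12 * ennreal (min M1 (min M3 M2)) * ennreal (min K1 K3)
        * min (ecard {k. - k \<in> N1}) (ecard N3) * sq_integral (\<lambda>y. h1 (- y)) * sq_integral h3 * sq_integral h2"
      unfolding rotate
      by (rule convolution_form_square_le_supported[OF _ _ _ supported_in_reflect[OF h1] h3 h2 M(1,3,2) K(1,3)]) measurable
    also have "\<dots> = 12 * ennreal (min M1 (min M2 M3)) * ennreal (min K1 (min K2 K3))
        * min (ecard N1) (min (ecard N2) (ecard N3)) * sq_integral h1 * sq_integral h3 * sq_integral h2"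
      by (simp only: min_eqs ecard_N sq_reflect[OF assms(1)])
    finally show ?thesis
      by (simp only: ac_simps)
  next
    case 3
    then have min_eqs: "min K1 (min K2 K3) = min K2 K3"
      "min (ecard N1) (min (ecard N2) (ecard N3)) = min (ecard N2) (ecard N3)"
      "min M2 (min M3 M1) = min M1 (min M2 M3)"
      by (auto simp: min_def split: if_split_asm)
    have rotate: "convolution_form h1 h2 h3 = convolution_form (\<lambda>y. h2 (- y)) h3 h1"
      using convolution_form_commute[of h1 h2 h3] convolution_form_rotate[of h2 h1 h3] by simp
    have "convolution_form h1 h2 h3 ^ 2 \<le> 12 * ennreal (min M2 (min M3 M1)) * ennreal (min K2 K3)
        * min (ecard {k. - k \<in> N2}) (ecard N3) * sq_integral (\<lambda>y. h2 (- y)) * sq_integral h3 * sq_integral h1"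
      unfolding rotate
      by (rule convolution_form_square_le_supported[OF _ _ _ supported_in_reflect[OF h2] h3 h1 M(2,3,1) K(2,3)]) measurable
    also have "\<dots> = 12 * ennreal (min M1 (min M2 M3)) * ennreal (min K1 (min K2 K3))
        * min (ecard N1) (min (ecard N2) (ecard N3)) * sq_integral h2 * sq_integral h3 * sq_integral h1"
      by (simp only: min_eqs ecard_N sq_reflect[OF assms(2)])
    finally show ?thesis
      by (simp only: ac_simps)
  qed
qed

section \<open>Lattice coordinates\<close>

definition lattice_lift :: "real \<Rightarrow> (real \<times> real \<times> real \<Rightarrow> 'a) \<Rightarrow> point \<Rightarrow> 'a" where
  "lattice_lift lam F y = F (fst (fst y), snd (fst y), of_int (snd y) / lam)"

lemma lint_eq_R2Z:
  assumes [measurable]: "lattice_lift lam F \<in> borel_measurable R2Z"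
  shows "lint lam F = ennreal (1 / lam) * (\<integral>\<^sup>+y. lattice_lift lam F y \<partial>R2Z)"
proof -
  have "lint lam F = (\<integral>\<^sup>+a. (\<integral>\<^sup>+k. ennreal (1 / lam) * lattice_lift lam F (a, k) \<partial>count_space UNIV) \<partial>lborel)"
    unfolding lint_def lattice_lift_def by simp
  also have "\<dots> = (\<integral>\<^sup>+y. ennreal (1 / lam) * lattice_lift lam F y \<partial>R2Z)"
  proof -
    have "(\<lambda>y. ennreal (1 / lam) * lattice_lift lam F y) \<in> borel_measurable (lborel \<Otimes>\<^sub>M count_space UNIV)"
      using assms unfolding R2Z_def by measurable
    from R2Z.M2.nn_integral_fst[OF this] show ?thesis
      by (simp add: R2Z_def)
  qed
  also have "\<dots> = ennreal (1 / lam) * (\<integral>\<^sup>+y. lattice_lift lam F y \<partial>R2Z)"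
    by (rule nn_integral_cmult) measurable
  finally show ?thesis .
qed

lemma lattice_lift_conv:
  assumes "lam \<noteq> 0" and [measurable]: "lattice_lift lam F \<in> borel_measurable R2Z" "lattice_lift lam G \<in> borel_measurable R2Z"
  shows "lattice_lift lam (conv lam F G) y = ennreal (1 / lam) * (\<integral>\<^sup>+x. lattice_lift lam F (y - x) * lattice_lift lam G x \<partial>R2Z)"
proof -
  define H where "H = (\<lambda>(\<tau>', \<xi>', q'). F (fst (fst y) - \<tau>', snd (fst y) - \<xi>', of_int (snd y) / lam - q') * G (\<tau>', \<xi>', q'))"
  have "lattice_lift lam H = (\<lambda>x. lattice_lift lam F (y - x) * lattice_lift lam G x)"
    using \<open>lam \<noteq> 0\<close> by (auto simp: lattice_lift_def H_def diff_divide_distrib)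
  moreover have "lattice_lift lam (conv lam F G) y = lint lam H"
    unfolding lattice_lift_def conv_def H_def by simp
  moreover have "(\<lambda>x. lattice_lift lam F (y - x) * lattice_lift lam G x) \<in> borel_measurable R2Z"
    by measurable
  ultimately show ?thesis
    by (simp add: lint_eq_R2Z)
qed

lemma lint_conv_eq_convolution_form:
  assumes "lam \<noteq> 0" and [measurable]: "lattice_lift lam F \<in> borel_measurable R2Z" "lattice_lift lam G \<in> borel_measurable R2Z"
    "lattice_lift lam H \<in> borel_measurable R2Z"
  shows "lint lam (\<lambda>x. conv lam F G x * H x)
    = ennreal (1 / lam) ^ 2 * convolution_form (lattice_lift lam F) (lattice_lift lam G) (lattice_lift lam H)"
proof -
  have lattice_lift_eq: "lattice_lift lam (\<lambda>x. conv lam F G x * H x)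
      = (\<lambda>y. ennreal (1 / lam) * ((\<integral>\<^sup>+x. lattice_lift lam F (y - x) * lattice_lift lam G x \<partial>R2Z) * lattice_lift lam H y))"
    using lattice_lift_conv[OF assms(1-3)] by (simp add: fun_eq_iff lattice_lift_def mult.assoc)
  have "lint lam (\<lambda>x. conv lam F G x * H x)
      = ennreal (1 / lam) * (\<integral>\<^sup>+y. ennreal (1 / lam) * ((\<integral>\<^sup>+x. lattice_lift lam F (y - x) * lattice_lift lam G x \<partial>R2Z) * lattice_lift lam H y) \<partial>R2Z)"
    unfolding lattice_lift_eq[symmetric] by (rule lint_eq_R2Z) (unfold lattice_lift_eq, measurable)
  also have "\<dots> = ennreal (1 / lam) ^ 2 * convolution_form (lattice_lift lam F) (lattice_lift lam G) (lattice_lift lam H)"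
    unfolding convolution_form_def
    by (subst nn_integral_cmult) (measurable, simp add: power2_eq_square mult.assoc)
  finally show ?thesis .
qed

lemma abs_le_japan: "\<bar>x\<bar> \<le> japan x"
  unfolding japan_def by (metis real_sqrt_abs real_sqrt_le_mono le_add_same_cancel2 zero_le_one)

lemma ennreal_min_mult_left: "min (c * a) (c * b) = (c :: ennreal) * min a b"
proof (cases "a \<le> b")
  case True
  then show ?thesis
    by (simp add: min.absorb1 mult_left_mono)
next
  case False
  then have "b \<le> a"
    by simp
  then show ?thesis
    by (simp add: min.absorb2 mult_left_mono)
qed

lemma lattice_lift_norm_properties:
  fixes f :: "real \<times> real \<times> real \<Rightarrow> complex"
  assumes "(\<exists>j::int. M = 2 powr j) \<and> (\<exists>n::nat. K = 2 ^ n) \<and> I \<subseteq> lattice lam \<and>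
      (\<forall>k::int. (\<lambda>p. f (fst p, snd p, of_int k / lam)) \<in> borel_measurable lborel) \<and>
      L2sq lam f < \<infinity> \<and> (\<forall>x. f x \<noteq> 0 \<longrightarrow> x \<in> Dset lam M K \<and> snd (snd x) \<in> I)"
  defines "h \<equiv> lattice_lift lam (\<lambda>x. ennreal (norm (f x)))"
  shows "M > 0" "K \<ge> 0" "h \<in> borel_measurable R2Z" "supported_in lam M K {k. of_int k / lam \<in> I} h"
    "ennreal (L2norm lam f) = esqrt (ennreal (1 / lam) * sq_integral h)"
proof -
  show "M > 0" "K \<ge> 0"
    using assms(1) by auto
  have [measurable]: "(\<lambda>p. f (fst p, snd p, of_int k / lam)) \<in> borel_measurable borel" for k
    using assms(1) by simp
  have "(\<lambda>a. ennreal (norm (f (fst a, snd a, of_int k / lam)))) \<in> borel_measurable borel" for k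
    by measurable
  then show h_measurable: "h \<in> borel_measurable R2Z"
    unfolding h_def lattice_lift_def by (intro measurable_R2Z_slices) simp
  show "supported_in lam M K {k. of_int k / lam \<in> I} h"
    unfolding supported_in_def
  proof (intro allI impI)
    fix \<tau> \<xi> k
    assume "h ((\<tau>, \<xi>), k) \<noteq> 0"
    then have "(\<tau>, \<xi>, of_int k / lam) \<in> Dset lam M K" "of_int k / lam \<in> I"
      using assms(1) by (auto simp: h_def lattice_lift_def)
    then show "\<bar>\<xi>\<bar> \<le> 3 * M / 2 \<and> \<bar>\<tau> - omega \<xi> (of_int k / lam)\<bar> \<le> K \<and> k \<in> {k. of_int k / lam \<in> I}"
      using abs_le_japan[of "\<tau> - omega \<xi> (of_int k / lam)"] by (auto simp: Dset_def sigma_def)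
  qed
  have "L2sq lam f = ennreal (1 / lam) * sq_integral h"
  proof -
    have "lattice_lift lam (\<lambda>x. ennreal (norm (f x) ^ 2)) = (\<lambda>y. h y ^ 2)"
      by (simp add: fun_eq_iff h_def lattice_lift_def ennreal_power)
    then show ?thesis
      unfolding L2sq_def using h_measurable by (simp add: lint_eq_R2Z)
  qed
  then show "ennreal (L2norm lam f) = esqrt (ennreal (1 / lam) * sq_integral h)"
    using assms(1) by (auto simp: L2norm_def esqrt_def)
qed

lemma L2norm_nonneg: "L2norm lam f \<ge> 0"
  by (simp add: L2norm_def)

lemma scaled_square_root_bound:
  fixes c T n U1 U2 U3 :: ennreal
  assumes "T ^ 2 \<le> 12 * ennreal m * ennreal \<kappa> * n * U1 * U2 * U3" "m \<ge> 0" "\<kappa> \<ge> 0"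
  shows "c ^ 2 * T \<le> ennreal (sqrt 12) * ennreal (sqrt m) * ennreal (sqrt \<kappa>) * esqrt (c * n)
    * (esqrt (c * U1) * esqrt (c * U2) * esqrt (c * U3))"
proof -
  have "(c ^ 2 * T) ^ 2 \<le> c ^ 4 * (12 * ennreal m * ennreal \<kappa> * n * U1 * U2 * U3)"
    using assms(1) by (simp add: power_mult_distrib power_mult[symmetric] mult_left_mono)
  also have "\<dots> = 12 * ennreal m * ennreal \<kappa> * (c * n) * ((c * U1) * (c * U2) * (c * U3))"
    by (simp add: power_def eval_nat_numeral mult_ac)
  finally show ?thesis
    using assms(2,3) by (simp add: le_esqrt_iff[symmetric] esqrt_mult ennreal_sqrt_eq_esqrt)
qed

lemma trilinear_estimate:
  fixes f :: "nat \<Rightarrow> real \<times> real \<times> real \<Rightarrow> complex"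
  assumes "lam \<ge> 1"
    and "\<forall>i\<in>{1,2,3}. (\<exists>j::int. M i = 2 powr j) \<and> (\<exists>n::nat. K i = 2 ^ n) \<and> I i \<subseteq> lattice lam \<and>
      (\<forall>k::int. (\<lambda>p. f i (fst p, snd p, of_int k / lam)) \<in> borel_measurable lborel) \<and>
      L2sq lam (f i) < \<infinity> \<and> (\<forall>x. f i x \<noteq> 0 \<longrightarrow> x \<in> Dset lam (M i) (K i) \<and> snd (snd x) \<in> I i)"
  shows "lint lam (\<lambda>x. conv lam (\<lambda>y. ennreal (norm (f 1 y))) (\<lambda>y. ennreal (norm (f 2 y))) x * ennreal (norm (f 3 x)))
    \<le> ennreal (sqrt 12) * ennreal (sqrt (min (M 1) (min (M 2) (M 3)))) * ennreal (sqrt (min (K 1) (min (K 2) (K 3))))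
      * esqrt (min (qmeas lam (I 1)) (min (qmeas lam (I 2)) (qmeas lam (I 3))))
      * ennreal (L2norm lam (f 1) * L2norm lam (f 2) * L2norm lam (f 3))"
proof -
  define h where "h i = lattice_lift lam (\<lambda>y. ennreal (norm (f i y)))" for i
  define N where "N i = {k. of_int k / lam \<in> I i}" for i
  define c where "c = ennreal (1 / lam)"
  note lifted = lattice_lift_norm_properties[OF bspec[OF assms(2)], folded h_def N_def c_def]
  have "convolution_form (h 1) (h 2) (h 3) ^ 2 \<le> 12 * ennreal (min (M 1) (min (M 2) (M 3)))
      * ennreal (min (K 1) (min (K 2) (K 3))) * min (ecard (N 1)) (min (ecard (N 2)) (ecard (N 3)))
      * sq_integral (h 1) * sq_integral (h 2) * sq_integral (h 3)"
    by (rule convolution_form_square_bound[where lam=lam]) (simp_all add: lifted)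
  moreover have "min (M 1) (min (M 2) (M 3)) \<ge> 0" "min (K 1) (min (K 2) (K 3)) \<ge> 0"
    using lifted(1,2)[of 1] lifted(1,2)[of 2] lifted(1,2)[of 3] by simp_all
  ultimately have "c ^ 2 * convolution_form (h 1) (h 2) (h 3)
      \<le> ennreal (sqrt 12) * ennreal (sqrt (min (M 1) (min (M 2) (M 3)))) * ennreal (sqrt (min (K 1) (min (K 2) (K 3))))
        * esqrt (c * min (ecard (N 1)) (min (ecard (N 2)) (ecard (N 3))))
        * (esqrt (c * sq_integral (h 1)) * esqrt (c * sq_integral (h 2)) * esqrt (c * sq_integral (h 3)))"
    by (rule scaled_square_root_bound)
  moreover have "lint lam (\<lambda>x. conv lam (\<lambda>y. ennreal (norm (f 1 y))) (\<lambda>y. ennreal (norm (f 2 y))) x * ennreal (norm (f 3 x)))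
      = c ^ 2 * convolution_form (h 1) (h 2) (h 3)"
    unfolding c_def h_def using \<open>lam \<ge> 1\<close> lifted(3)[unfolded h_def]
    by (intro lint_conv_eq_convolution_form) simp_all
  moreover have "min (qmeas lam (I 1)) (min (qmeas lam (I 2)) (qmeas lam (I 3)))
      = c * min (ecard (N 1)) (min (ecard (N 2)) (ecard (N 3)))"
    by (simp add: qmeas_def N_def c_def ennreal_min_mult_left)
  moreover have "ennreal (L2norm lam (f 1) * L2norm lam (f 2) * L2norm lam (f 3))
      = esqrt (c * sq_integral (h 1)) * esqrt (c * sq_integral (h 2)) * esqrt (c * sq_integral (h 3))"
    using lifted(5)[of 1] lifted(5)[of 2] lifted(5)[of 3] by (simp add: ennreal_mult L2norm_nonneg)
  ultimately show ?thesis
    by (simp only:)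
qed

theorem mainTheorem9:
  "\<exists>C>0. \<forall>(lam::real) (M :: nat \<Rightarrow> real) (K :: nat \<Rightarrow> real) (I :: nat \<Rightarrow> real set)
           (f :: nat \<Rightarrow> real \<times> real \<times> real \<Rightarrow> complex).
     lam \<ge> 1 \<longrightarrow>
     (\<forall>i\<in>{1,2,3}.
        (\<exists>j::int. M i = 2 powr j) \<and> (\<exists>n::nat. K i = 2 ^ n) \<and> I i \<subseteq> lattice lam \<and>
        (\<forall>k::int. (\<lambda>p. f i (fst p, snd p, of_int k / lam)) \<in> borel_measurable lborel) \<and>
        L2sq lam (f i) < \<infinity> \<and>
        (\<forall>x. f i x \<noteq> 0 \<longrightarrow> x \<in> Dset lam (M i) (K i) \<and> snd (snd x) \<in> I i)) \<longrightarrow>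
     lint lam (\<lambda>x. conv lam (\<lambda>y. ennreal (norm (f 1 y))) (\<lambda>y. ennreal (norm (f 2 y))) x
                  * ennreal (norm (f 3 x)))
       \<le> ennreal C * ennreal (sqrt (min (M 1) (min (M 2) (M 3))))
           * ennreal (sqrt (min (K 1) (min (K 2) (K 3))))
           * esqrt (min (qmeas lam (I 1)) (min (qmeas lam (I 2)) (qmeas lam (I 3))))
           * ennreal (L2norm lam (f 1) * L2norm lam (f 2) * L2norm lam (f 3))"
  by (intro exI[of _ "sqrt 12"] conjI allI impI) (simp, rule trilinear_estimate)

end
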